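(* Let $M$ be a finite $\mathscr J$-trivial monoid and $k$ a field. Then $Q(kM)=Q(\mathscr K(M))$; that is, the vertex set of $Q(kM)$ is $E(M)$ and the set of arrows from $e$ to $f$ is $\mathrm{Irr}_{\mathscr K(M)}(e,f)$.
   Context: $M$ is $\mathscr J$-trivial if $MmM=MnM$ implies $m=n$. $E(M)$ is the set of idempotents; the simple $kM$-module attached to $e\in E(M)$ is one-dimensional with $m$ acting by $1$ if $e\in MmM$ and $0$ otherwise. The Karoubi envelope $\mathscr K(M)$ has objects $E(M)$, morphisms $e\to f$ the elements of $fMe$, composition by multiplication. A morphism is irreducible if it is neither a split monomorphism nor a split epimorphism and whenever it factors as $gh$, $h$ is a split monomorphism or $g$ a split epimorphism; $\mathrm{Irr}_{\mathscr K(M)}(e,f)$ is the set of these. $Q(\mathscr K(M))$ has as vertices the isomorphism classes of objects and as arrows the irreducible morphisms between chosen representatives. The quiver of $kM$ has $\dim\mathrm{Ext}^1(S,T)$ arrows from $S$ to $T$. *)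

theory Defs
  imports Main "HOL.Vector_Spaces" "HOL-Library.Function_Algebras"
begin

definition two_sided_ideal :: "'m::monoid_mult \<Rightarrow> 'm set" where
  "two_sided_ideal m = {a * m * b | a b. True}"

definition J_trivial :: "'m::monoid_mult itself \<Rightarrow> bool" where
  "J_trivial _ \<longleftrightarrow> (\<forall>m n::'m. two_sided_ideal m = two_sided_ideal n \<longrightarrow> m = n)"

definition idems :: "'m::monoid_mult set" where
  "idems = {e. e * e = e}"

text \<open>Character of the simple module S_e: m acts by 1 if e in MmM, else 0.\<close>
definition simple_char :: "'m::monoid_mult \<Rightarrow> 'm \<Rightarrow> 'k::field" where
  "simple_char e m = (if e \<in> two_sided_ideal m then 1 else 0)"

text \<open>One-dimensional kM-modules = monoid homomorphisms M -> (k, *).\<close>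
definition monoid_char :: "('m::monoid_mult \<Rightarrow> 'k::field) \<Rightarrow> bool" where
  "monoid_char \<chi> \<longleftrightarrow> \<chi> 1 = 1 \<and> (\<forall>m n. \<chi> (m * n) = \<chi> m * \<chi> n)"

text \<open>Karoubi envelope: morphisms e -> f are the elements of fMe; identity on e is e.\<close>
definition kmor :: "'m::monoid_mult \<Rightarrow> 'm \<Rightarrow> 'm set" where
  "kmor e f = {f * m * e | m. True}"

definition split_mono :: "'m::monoid_mult \<Rightarrow> 'm \<Rightarrow> 'm \<Rightarrow> bool" where
  "split_mono e f h \<longleftrightarrow> (\<exists>s \<in> kmor f e. s * h = e)"

definition split_epi :: "'m::monoid_mult \<Rightarrow> 'm \<Rightarrow> 'm \<Rightarrow> bool" where
  "split_epi e f g \<longleftrightarrow> (\<exists>s \<in> kmor f e. g * s = f)"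

definition Irr :: "'m::monoid_mult \<Rightarrow> 'm \<Rightarrow> 'm set" where
  "Irr e f = {x \<in> kmor e f. \<not> split_mono e f x \<and> \<not> split_epi e f x \<and>
     (\<forall>c \<in> idems. \<forall>h \<in> kmor e c. \<forall>g \<in> kmor c f. g * h = x \<longrightarrow>
        split_mono e c h \<or> split_epi c f g)}"

text \<open>Ext^1(S,T) for one-dimensional modules with characters chiS, chiT, computed via
  2-dimensional extensions 0 -> T -> E -> S -> 0 of left kM-modules: m acts on E by the matrix
  [[chiT m, d m],[0, chiS m]]. Such d (linear maps kM -> k, i.e. functions M -> k) form the
  space of cocycles; equivalent extensions differ by coboundaries c(chiT - chiS).\<close>

definition fscale :: "'k::field \<Rightarrow> ('m \<Rightarrow> 'k) \<Rightarrow> ('m \<Rightarrow> 'k)" where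
  "fscale c d = (\<lambda>m. c * d m)"

definition ext_cocycles :: "('m::monoid_mult \<Rightarrow> 'k::field) \<Rightarrow> ('m \<Rightarrow> 'k) \<Rightarrow> ('m \<Rightarrow> 'k) set" where
  "ext_cocycles chiS chiT = {d. \<forall>m n. d (m * n) = chiT m * d n + d m * chiS n}"

definition ext_coboundaries :: "('m::monoid_mult \<Rightarrow> 'k::field) \<Rightarrow> ('m \<Rightarrow> 'k) \<Rightarrow> ('m \<Rightarrow> 'k) set" where
  "ext_coboundaries chiS chiT = {(\<lambda>m. c * (chiT m - chiS m)) | c. True}"

definition dim_Ext1 :: "('m::monoid_mult \<Rightarrow> 'k::field) \<Rightarrow> ('m \<Rightarrow> 'k) \<Rightarrow> nat" where
  "dim_Ext1 chiS chiT =
     vector_space.dim (fscale :: 'k \<Rightarrow> _) (ext_cocycles chiS chiT)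
     - vector_space.dim (fscale :: 'k \<Rightarrow> _) (ext_coboundaries chiS chiT)"

end

theory Submission
  imports Defs
begin

(*
  In a J-trivial monoid an idempotent e lies in MmM iff e m = e iff m e = e. Hence the character
  of S_e is multiplicative, and every character is the character of the left zero of its support.
  In the Karoubi envelope the only split monomorphisms out of e and split epimorphisms into f are
  the identities, so Irr(e,f) consists of the x \<in> fMe, x \<noteq> e, f, admitting no factorisation x = u v
  with v e \<noteq> e and f u \<noteq> f.

  For Ext^1, a cocycle d vanishing on Irr(e,f) vanishes on the rest of fMe - {e, f} (write such an
  element as u v as above), and d m is determined by d (f m e), d e and d f; hence d is a
  coboundary. Conversely every x \<in> Irr(e,f) carries a cocycle taking the value 1 at x and 0 at the
  other irreducible morphisms. So the cocycles split as coboundaries plus a space with basis indexed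
  by Irr(e,f).
*)

lemma two_sided_idealI: "a * m * b \<in> two_sided_ideal m"
  unfolding two_sided_ideal_def by blast

lemma two_sided_ideal_refl: "m \<in> two_sided_ideal m"
  using two_sided_idealI[of 1 m 1] by simp

lemma two_sided_ideal_subset:
  assumes "y \<in> two_sided_ideal z"
  shows "two_sided_ideal y \<subseteq> two_sided_ideal z"
proof
  fix x assume "x \<in> two_sided_ideal y"
  moreover obtain a b where "y = a * z * b"
    using assms unfolding two_sided_ideal_def by blast
  ultimately obtain c d where "x = (c * a) * z * (b * d)"
    unfolding two_sided_ideal_def by (auto simp: mult.assoc)
  then show "x \<in> two_sided_ideal z"
    by (simp add: two_sided_idealI)
qed

lemma J_trivial_antisym:
  assumes "J_trivial TYPE('m::monoid_mult)" "(y::'m) \<in> two_sided_ideal z" "z \<in> two_sided_ideal y"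
  shows "y = z"
  using assms two_sided_ideal_subset unfolding J_trivial_def by blast

lemma J_trivial_factor_eq:
  assumes "J_trivial TYPE('m::monoid_mult)" "(x::'m) = u * y * v" "y = s * x * t"
  shows "x = y"
  using J_trivial_antisym[OF assms(1)] two_sided_idealI assms(2,3) by metis

lemma J_trivial_idempotent_absorbs:
  assumes J: "J_trivial TYPE('m::monoid_mult)" and e: "(e::'m) * e = e"
    and "e \<in> two_sided_ideal m"
  shows "e * m = e" "m * e = e"
proof -
  obtain a b where eab: "e = a * m * b"
    using assms(3) unfolding two_sided_ideal_def by blast
  have e_eq: "e = e * (a * m * b) * e"
    using e eab by (metis mult.assoc)
  have eam: "e * a * m = e"
    by (rule J_trivial_factor_eq[OF J, of _ 1 e "a * m" 1 "b * e"])
       (use e_eq in \<open>simp_all add: mult.assoc\<close>)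
  have mbe: "m * b * e = e"
    by (rule J_trivial_factor_eq[OF J, of _ "m * b" e 1 "e * a" 1])
       (use e_eq in \<open>simp_all add: mult.assoc\<close>)
  have "e = 1 * (e * m) * (b * e)"
    using e mbe by (simp add: mult.assoc)
  then show "e * m = e"
    using J_trivial_factor_eq[OF J, of "e * m" 1 e m 1 "b * e"] by simp
  have "e = (e * a) * (m * e) * 1"
    using e eam by (metis mult.assoc mult_1_right)
  then show "m * e = e"
    using J_trivial_factor_eq[OF J, of "m * e" m e 1 "e * a" 1] by simp
qed

lemma idempotent_in_ideal_iff_left:
  assumes "J_trivial TYPE('m::monoid_mult)" "(e::'m) * e = e"
  shows "e \<in> two_sided_ideal m \<longleftrightarrow> e * m = e"
  using J_trivial_idempotent_absorbs[OF assms] two_sided_idealI[of e m 1] by auto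

lemma idempotent_in_ideal_iff_right:
  assumes "J_trivial TYPE('m::monoid_mult)" "(e::'m) * e = e"
  shows "e \<in> two_sided_ideal m \<longleftrightarrow> m * e = e"
  using J_trivial_idempotent_absorbs[OF assms] two_sided_idealI[of 1 m e] by auto

lemma simple_char_idempotent_left:
  assumes "J_trivial TYPE('m::monoid_mult)" "(e::'m) * e = e"
  shows "simple_char e m = (if e * m = e then 1 else 0)"
  using idempotent_in_ideal_iff_left[OF assms] by (simp add: simple_char_def)

lemma simple_char_idempotent_right:
  assumes "J_trivial TYPE('m::monoid_mult)" "(e::'m) * e = e"
  shows "simple_char e m = (if m * e = e then 1 else 0)"
  using idempotent_in_ideal_iff_right[OF assms] by (simp add: simple_char_def)

lemma simple_char_mult:
  assumes "J_trivial TYPE('m::monoid_mult)" "(e::'m) * e = e"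
  shows "simple_char e (m * n) = simple_char e m * simple_char e n"
proof -
  have "e * (m * n) = e \<longleftrightarrow> e * m = e \<and> e * n = e"
  proof
    assume "e * (m * n) = e"
    moreover have "m * n \<in> two_sided_ideal m" "m * n \<in> two_sided_ideal n"
      using two_sided_idealI[of 1 m n] two_sided_idealI[of m n 1] by simp_all
    ultimately show "e * m = e \<and> e * n = e"
      using two_sided_ideal_subset idempotent_in_ideal_iff_left[OF assms] by blast
  next
    assume "e * m = e \<and> e * n = e"
    then show "e * (m * n) = e"
      by (simp add: mult.assoc[symmetric])
  qed
  then show ?thesis
    by (simp add: simple_char_idempotent_left[OF assms])
qed

lemma monoid_char_simple_char:
  assumes "J_trivial TYPE('m::monoid_mult)" "(e::'m) * e = e"
  shows "monoid_char (simple_char e :: 'm \<Rightarrow> 'k::field)"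
  unfolding monoid_char_def
  by (simp add: simple_char_mult[OF assms] simple_char_idempotent_left[OF assms, of 1])

lemma J_trivial_left_zero_exists:
  fixes S :: "'m::{monoid_mult,finite} set"
  assumes J: "J_trivial TYPE('m)"
    and closed: "\<And>m n. m \<in> S \<Longrightarrow> n \<in> S \<Longrightarrow> m * n \<in> S" and "x \<in> S"
  shows "\<exists>e\<in>S. \<forall>m\<in>S. e * m = e"
proof -
  obtain e where eS: "e \<in> S" and min: "\<And>m. m \<in> S \<Longrightarrow> card (two_sided_ideal e) \<le> card (two_sided_ideal m)"
    using ex_has_least_nat[of "\<lambda>m. m \<in> S" x "\<lambda>m. card (two_sided_ideal m)"] \<open>x \<in> S\<close> by blast
  have "e * m = e" if "m \<in> S" for m
  proof -
    have "two_sided_ideal (e * m) \<subseteq> two_sided_ideal e"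
      using two_sided_ideal_subset two_sided_idealI[of 1 e m] by simp
    moreover have "card (two_sided_ideal e) \<le> card (two_sided_ideal (e * m))"
      using min closed eS that by blast
    ultimately have "two_sided_ideal (e * m) = two_sided_ideal e"
      by (rule card_seteq[OF finite])
    then show ?thesis
      using J unfolding J_trivial_def by blast
  qed
  then show ?thesis
    using eS by blast
qed

lemma monoid_char_eq_simple_char:
  fixes \<chi> :: "'m::{monoid_mult,finite} \<Rightarrow> 'k::field"
  assumes J: "J_trivial TYPE('m)" and "monoid_char \<chi>"
  shows "\<exists>e\<in>idems. \<chi> = simple_char e"
proof -
  have \<chi>1: "\<chi> 1 = 1" and \<chi>mult: "\<And>m n. \<chi> (m * n) = \<chi> m * \<chi> n"
    using assms(2) unfolding monoid_char_def by auto
  \<comment> \<open>The support of \<chi> is a submonoid; its left zero is the idempotent we are looking for.\<close>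
  obtain e where e: "\<chi> e \<noteq> 0" and absorb: "\<And>m. \<chi> m \<noteq> 0 \<Longrightarrow> e * m = e"
    using J_trivial_left_zero_exists[OF J, of "{m. \<chi> m \<noteq> 0}" 1] \<chi>1 \<chi>mult by auto
  have ee: "e * e = e"
    using absorb e by blast
  have "\<chi> e = 1"
    using \<chi>mult[of e e] ee e by simp
  have "\<chi> m = simple_char e m" for m
  proof (cases "\<chi> m = 0")
    case True
    then have "e * m \<noteq> e"
      using \<chi>mult[of e m] \<open>\<chi> e = 1\<close> by auto
    then show ?thesis
      using True by (simp add: simple_char_idempotent_left[OF J ee])
  next
    case False
    then show ?thesis
      using \<chi>mult[of e m] absorb \<open>\<chi> e = 1\<close> by (simp add: simple_char_idempotent_left[OF J ee])
  qed
  then show ?thesis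
    using ee unfolding idems_def by blast
qed

lemma inj_on_simple_char:
  assumes J: "J_trivial TYPE('m::monoid_mult)"
  shows "inj_on (simple_char :: 'm \<Rightarrow> 'm \<Rightarrow> 'k::field) idems"
proof (rule inj_onI)
  fix e f :: 'm
  assume "(simple_char e :: 'm \<Rightarrow> 'k) = simple_char f"
  then have "(simple_char e f :: 'k) = simple_char f f" "(simple_char f e :: 'k) = simple_char e e"
    by simp_all
  then have "e \<in> two_sided_ideal f" "f \<in> two_sided_ideal e"
    by (simp_all add: simple_char_def two_sided_ideal_refl split: if_splits)
  then show "e = f"
    using J_trivial_antisym[OF J] by blast
qed

lemma bij_betw_simple_char_monoid_char:
  assumes J: "J_trivial TYPE('m::{monoid_mult,finite})"
  shows "bij_betw (simple_char :: 'm \<Rightarrow> 'm \<Rightarrow> 'k::field) idems {\<chi>. monoid_char \<chi>}"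
  unfolding bij_betw_def
  using inj_on_simple_char[OF J] monoid_char_simple_char[OF J] monoid_char_eq_simple_char[OF J]
  by (auto simp: idems_def)

lemma kmor_mult_source:
  assumes "(e::'m::monoid_mult) * e = e" "h \<in> kmor e c"
  shows "h * e = h"
  using assms unfolding kmor_def by (auto simp: mult.assoc)

lemma kmor_mult_target:
  assumes "(f::'m::monoid_mult) * f = f" "g \<in> kmor c f"
  shows "f * g = g"
  using assms unfolding kmor_def by (auto simp: mult.assoc[symmetric])

lemma mem_kmor_iff:
  assumes "(e::'m::monoid_mult) * e = e" "f * f = f"
  shows "x \<in> kmor e f \<longleftrightarrow> f * x * e = x"
proof
  assume "x \<in> kmor e f"
  then show "f * x * e = x"
    using kmor_mult_source[OF assms(1)] kmor_mult_target[OF assms(2)] by (simp add: mult.assoc)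
next
  assume "f * x * e = x"
  then have "x = f * x * e"
    by simp
  then show "x \<in> kmor e f"
    unfolding kmor_def by blast
qed

lemma split_mono_iff:
  assumes J: "J_trivial TYPE('m::monoid_mult)" and e: "(e::'m) * e = e" and c: "c * c = c"
    and h: "h \<in> kmor e c"
  shows "split_mono e c h \<longleftrightarrow> h = e"
proof
  assume "split_mono e c h"
  then obtain s where "s * h = e"
    unfolding split_mono_def by blast
  moreover obtain m where "h = c * m * e"
    using h unfolding kmor_def by blast
  ultimately have "h = (c * m) * e * 1" "e = s * h * 1"
    by simp_all
  then show "h = e"
    by (rule J_trivial_factor_eq[OF J])
next
  assume "h = e"
  then have "c * e = e"
    using kmor_mult_target[OF c h] by simp
  then have "e * c * h = e"
    using \<open>h = e\<close> e by (simp add: mult.assoc)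
  moreover have "e * c = e * 1 * c"
    by simp
  ultimately show "split_mono e c h"
    unfolding split_mono_def kmor_def by blast
qed

lemma split_epi_iff:
  assumes J: "J_trivial TYPE('m::monoid_mult)" and f: "(f::'m) * f = f" and c: "c * c = c"
    and g: "g \<in> kmor c f"
  shows "split_epi c f g \<longleftrightarrow> g = f"
proof
  assume "split_epi c f g"
  then obtain s where "g * s = f"
    unfolding split_epi_def by blast
  moreover obtain m where "g = f * m * c"
    using g unfolding kmor_def by blast
  ultimately have "g = 1 * f * (m * c)" "f = 1 * g * s"
    by (simp_all add: mult.assoc)
  then show "g = f"
    by (rule J_trivial_factor_eq[OF J])
next
  assume "g = f"
  then have "f * c = f"
    using kmor_mult_source[OF c g] by simp
  then have "g * (c * f) = f"
    using \<open>g = f\<close> f by (simp add: mult.assoc[symmetric])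
  moreover have "c * f = c * 1 * f"
    by simp
  ultimately show "split_epi c f g"
    unfolding split_epi_def kmor_def by blast
qed

interpretation function_space: vector_space "fscale :: 'k::field \<Rightarrow> ('a \<Rightarrow> 'k) \<Rightarrow> 'a \<Rightarrow> 'k"
  by unfold_locales (auto simp: fscale_def fun_eq_iff algebra_simps)

lemma fscale_apply: "fscale c w x = c * w x"
  by (simp add: fscale_def)

lemma sum_apply: "(\<Sum>i\<in>A. F i) x = (\<Sum>i\<in>A. F i x)"
  by (induction A rule: infinite_finite_induct) auto

lemma function_space_span_vanishing:
  assumes "w \<in> function_space.span A" "\<And>v. v \<in> A \<Longrightarrow> v x = (0::'k::field)"
  shows "w x = 0"
proof -
  have "function_space.subspace {w :: 'a \<Rightarrow> 'k. w x = 0}"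
    unfolding function_space.subspace_def fscale_def by simp
  then show ?thesis
    using function_space.span_minimal[of A "{w. w x = 0}"] assms by blast
qed

lemma function_space_dim_by_coordinates:
  fixes Z G :: "('a \<Rightarrow> 'k::field) set" and P :: "'a set" and \<delta> :: "'a \<Rightarrow> 'a \<Rightarrow> 'k"
  assumes Z: "function_space.subspace Z"
    and G: "finite G" "function_space.independent G" "G \<subseteq> Z"
    and G_vanish: "\<And>w y. w \<in> G \<Longrightarrow> y \<in> P \<Longrightarrow> w y = 0"
    and P: "finite P"
    and \<delta>: "\<And>x. x \<in> P \<Longrightarrow> \<delta> x \<in> Z"
    and \<delta>_dual: "\<And>x y. x \<in> P \<Longrightarrow> y \<in> P \<Longrightarrow> \<delta> x y = (if y = x then 1 else 0)"
    and kernel: "\<And>w. w \<in> Z \<Longrightarrow> (\<And>y. y \<in> P \<Longrightarrow> w y = 0) \<Longrightarrow> w \<in> function_space.span G"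
  shows "function_space.dim Z = card G + card P"
proof -
  have inj: "inj_on \<delta> P"
    by (rule inj_onI) (metis \<delta>_dual one_neq_zero)
  have disjoint: "G \<inter> \<delta> ` P = {}"
    using G_vanish \<delta>_dual by fastforce
  have "function_space.independent (G \<union> \<delta> ` Q)" if "Q \<subseteq> P" for Q
    using finite_subset[OF that P] that
  proof (induction Q rule: finite_induct)
    case empty
    then show ?case
      using G by simp
  next
    case (insert x Q)
    have "\<delta> x \<notin> function_space.span (G \<union> \<delta> ` Q)"
    proof
      assume "\<delta> x \<in> function_space.span (G \<union> \<delta> ` Q)"
      moreover have "v x = 0" if "v \<in> G \<union> \<delta> ` Q" for v
        using that insert G_vanish \<delta>_dual by auto
      ultimately have "\<delta> x x = 0"
        by (rule function_space_span_vanishing)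
      then show False
        using insert \<delta>_dual by simp
    qed
    then show ?case
      using insert function_space.independent_insertI by simp
  qed
  then have indep: "function_space.independent (G \<union> \<delta> ` P)"
    by blast
  have "Z \<subseteq> function_space.span (G \<union> \<delta> ` P)"
  proof
    fix w assume w: "w \<in> Z"
    define s where "s = (\<Sum>x\<in>P. fscale (w x) (\<delta> x))"
    have "s \<in> Z"
      unfolding s_def using Z w \<delta> by (intro function_space.subspace_sum function_space.subspace_scale)
    have "s \<in> function_space.span (\<delta> ` P)"
      unfolding s_def by (intro function_space.span_sum function_space.span_scale function_space.span_base) simp
    moreover have "w - s \<in> function_space.span G"
    proof (rule kernel)
      show "w - s \<in> Z"
        using Z w \<open>s \<in> Z\<close> by (rule function_space.subspace_diff)
      fix y assume "y \<in> P"
      then have "s y = (\<Sum>x\<in>P. if x = y then w y else 0)"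
        unfolding s_def sum_apply fscale_apply using \<delta>_dual by (intro sum.cong) auto
      then show "(w - s) y = 0"
        using P \<open>y \<in> P\<close> by simp
    qed
    ultimately have "(w - s) + s \<in> function_space.span (G \<union> \<delta> ` P)"
      by (meson function_space.span_add function_space.span_mono in_mono sup_ge1 sup_ge2)
    then show "w \<in> function_space.span (G \<union> \<delta> ` P)"
      by simp
  qed
  then have "function_space.dim Z = card (G \<union> \<delta> ` P)"
    using G \<delta> by (intro function_space.dim_unique[OF _ _ indep refl]) auto
  also have "\<dots> = card G + card P"
    using card_Un_disjoint[OF G(1) _ disjoint] card_image[OF inj] P by simp
  finally show ?thesis .
qed

lemma ext_cocycles_subspace: "function_space.subspace (ext_cocycles \<chi> \<psi>)"
  unfolding function_space.subspace_def ext_cocycles_def fscale_def by (simp add: algebra_simps)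

lemma ext_coboundaries_eq_span:
  "ext_coboundaries \<chi> \<psi> = function_space.span {\<lambda>m. \<psi> m - \<chi> m}"
  unfolding ext_coboundaries_def function_space.span_singleton by (auto simp: fscale_def)

lemma ext_coboundary_in_cocycles:
  assumes "monoid_char \<chi>" "monoid_char \<psi>"
  shows "(\<lambda>m. \<psi> m - \<chi> m) \<in> ext_cocycles \<chi> \<psi>"
  using assms unfolding monoid_char_def ext_cocycles_def by (auto simp: algebra_simps)

text \<open>The indicator of the set of m with f m e = x fails the cocycle identity at (u, v) exactly by
  [f e = x] times the character of S_f at u and the character of S_e at v; the second summand
  repairs this.\<close>
definition Irr_dual_cocycle :: "'m::monoid_mult \<Rightarrow> 'm \<Rightarrow> 'm \<Rightarrow> 'm \<Rightarrow> 'k::field" where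
  "Irr_dual_cocycle e f x m =
     (if f * m * e = x then 1 else 0) - (if f * e = x then simple_char f m else 0)"

context
  fixes e f :: "'m::monoid_mult"
  assumes J: "J_trivial TYPE('m)" and e: "e * e = e" and f: "f * f = f"
begin

lemma factorisations_through_idempotents_iff:
  assumes x: "f * x * e = x"
  shows "(\<forall>c \<in> idems. \<forall>h \<in> kmor e c. \<forall>g \<in> kmor c f. g * h = x \<longrightarrow> h = e \<or> g = f)
      \<longleftrightarrow> (\<forall>u v. u * v = x \<longrightarrow> v * e = e \<or> f * u = f)"
proof (intro iffI allI impI ballI)
  fix u v assume fac: "\<forall>c \<in> idems. \<forall>h \<in> kmor e c. \<forall>g \<in> kmor c f. g * h = x \<longrightarrow> h = e \<or> g = f"
    and "u * v = x"
  have "(f * u) * (v * e) = f * (u * v) * e"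
    by (simp add: mult.assoc)
  then have "(f * u) * (v * e) = x"
    using x \<open>u * v = x\<close> by simp
  moreover have "v * e = 1 * v * e" "f * u = f * u * 1"
    by simp_all
  then have "v * e \<in> kmor e 1" "f * u \<in> kmor 1 f" "1 \<in> idems"
    unfolding kmor_def idems_def by auto
  ultimately show "v * e = e \<or> f * u = f"
    using fac by blast
next
  fix c h g assume fac: "\<forall>u v. u * v = x \<longrightarrow> v * e = e \<or> f * u = f"
    and "c \<in> idems" "h \<in> kmor e c" "g \<in> kmor c f" "g * h = x"
  then show "h = e \<or> g = f"
    using fac kmor_mult_source[OF e] kmor_mult_target[OF f] by metis
qed

lemma Irr_iff:
  "x \<in> Irr e f \<longleftrightarrow> f * x * e = x \<and> x \<noteq> e \<and> x \<noteq> f \<and>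
     (\<forall>u v. u * v = x \<longrightarrow> v * e = e \<or> f * u = f)"
proof (cases "f * x * e = x")
  case x: True
  then have xk: "x \<in> kmor e f"
    using mem_kmor_iff[OF e f] by blast
  have "(\<forall>c \<in> idems. \<forall>h \<in> kmor e c. \<forall>g \<in> kmor c f. g * h = x \<longrightarrow>
        split_mono e c h \<or> split_epi c f g)
      \<longleftrightarrow> (\<forall>c \<in> idems. \<forall>h \<in> kmor e c. \<forall>g \<in> kmor c f. g * h = x \<longrightarrow> h = e \<or> g = f)"
    unfolding idems_def by (auto simp: split_mono_iff[OF J e] split_epi_iff[OF J f])
  then show ?thesis
    unfolding Irr_def factorisations_through_idempotents_iff[OF x, symmetric]
    using xk x split_mono_iff[OF J e f xk] split_epi_iff[OF J f e xk] by blast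
next
  case False
  then show ?thesis
    unfolding Irr_def using mem_kmor_iff[OF e f] by blast
qed

lemma simple_char_vanish_on_Irr:
  assumes "y \<in> Irr e f"
  shows "simple_char f y = 0" "simple_char e y = 0"
proof -
  have y: "f * y * e = y" "y \<noteq> e" "y \<noteq> f"
    using assms Irr_iff by blast+
  have "f * y \<noteq> f"
  proof
    assume "f * y = f"
    moreover have "y = 1 * f * (y * e)"
      using y(1) by (simp add: mult.assoc)
    ultimately show False
      using J_trivial_factor_eq[OF J, of y 1 f "y * e" f 1] y by simp
  qed
  then show "simple_char f y = 0"
    by (simp add: simple_char_idempotent_left[OF J f])
  have "y * e \<noteq> e"
  proof
    assume "y * e = e"
    moreover have "y = (f * y) * e * 1"
      using y(1) by simp
    ultimately show False
      using J_trivial_factor_eq[OF J, of y "f * y" e 1 1 e] y by simp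
  qed
  then show "simple_char e y = 0"
    by (simp add: simple_char_idempotent_right[OF J e])
qed

lemma cocycle_sandwich:
  assumes "d \<in> ext_cocycles (simple_char e) (simple_char f :: 'm \<Rightarrow> 'k::field)"
  shows "d (f * m * e) = d m + simple_char f m * d e + d f * simple_char e m"
proof -
  have co: "\<And>u v. d (u * v) = simple_char f u * d v + d u * simple_char e v"
    using assms unfolding ext_cocycles_def by blast
  have "simple_char f f = (1::'k)" "simple_char e e = (1::'k)"
    by (simp_all add: simple_char_idempotent_left[OF J f] simple_char_idempotent_left[OF J e] e f)
  moreover have "simple_char e (m * e) = (simple_char e m :: 'k)"
    using e by (simp add: simple_char_idempotent_right[OF J e] mult.assoc)
  ultimately show ?thesis
    using co[of f "m * e"] co[of m e] by (simp add: mult.assoc algebra_simps)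
qed

lemma cocycle_vanishing_on_Irr_vanishes_on_kmor:
  assumes d: "d \<in> ext_cocycles (simple_char e) (simple_char f :: 'm \<Rightarrow> 'k::field)"
    and d_Irr: "\<And>x. x \<in> Irr e f \<Longrightarrow> d x = 0"
    and y: "f * y * e = y" "y \<noteq> e" "y \<noteq> f"
  shows "d y = 0"
proof (cases "y \<in> Irr e f")
  case True
  then show ?thesis
    by (rule d_Irr)
next
  case False
  then obtain u v where uv: "u * v = y" "v * e \<noteq> e" "f * u \<noteq> f"
    using Irr_iff y by blast
  have "d (u * v) = simple_char f u * d v + d u * simple_char e v"
    using d unfolding ext_cocycles_def by blast
  then show ?thesis
    using uv by (simp add: simple_char_idempotent_left[OF J f] simple_char_idempotent_right[OF J e])
qed

lemma cocycle_eq_0: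
  assumes d: "d \<in> ext_cocycles (simple_char e) (simple_char f :: 'm \<Rightarrow> 'k::field)"
    and d_Irr: "\<And>x. x \<in> Irr e f \<Longrightarrow> d x = 0" and "d e = 0" "d f = 0"
  shows "d = 0"
proof
  fix m
  have "f * (f * m * e) * e = f * m * e"
    using e f by (simp add: mult.assoc[symmetric]) (simp add: mult.assoc)
  then have "d (f * m * e) = 0"
    using cocycle_vanishing_on_Irr_vanishes_on_kmor[OF d d_Irr] \<open>d e = 0\<close> \<open>d f = 0\<close>
    by (cases "f * m * e = e \<or> f * m * e = f") auto
  then show "d m = 0 m"
    using cocycle_sandwich[OF d, of m] \<open>d e = 0\<close> \<open>d f = 0\<close> by simp
qed

lemma cocycle_values_at_idempotents:
  assumes d: "d \<in> ext_cocycles (simple_char e) (simple_char f :: 'm \<Rightarrow> 'k::field)"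
    and d_Irr: "\<And>x. x \<in> Irr e f \<Longrightarrow> d x = 0"
  obtains c where "d e = c * (simple_char f e - simple_char e e)"
    and "d f = c * (simple_char f f - simple_char e f)"
proof -
  have co: "\<And>u v. d (u * v) = simple_char f u * d v + d u * simple_char e v"
    using d unfolding ext_cocycles_def by blast
  have char_f: "simple_char f m = (if f * m = f then 1 else (0::'k))" for m
    by (rule simple_char_idempotent_left[OF J f])
  have char_e: "simple_char e m = (if m * e = e then 1 else (0::'k))" for m
    by (rule simple_char_idempotent_right[OF J e])
  have char_values: "simple_char f f = (1::'k)" "simple_char e e = (1::'k)"
    using char_f[of f] char_e[of e] e f by simp_all
  have de: "simple_char f e * d e = 0" and df: "d f * simple_char e f = 0"
    using co[of e e] co[of f f] unfolding e f char_values(1,2) by simp_all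
  have dfe: "d (f * e) = d e + d f"
    using co[of f e] unfolding char_values(1,2) by simp
  show ?thesis
  proof (cases "f * e = e")
    case True
    then have "d f = 0"
      using df char_e[of f] by simp
    moreover have "d e = - d e * (simple_char f e - 1)"
    proof (cases "e = f")
      case True
      then show ?thesis
        using de char_values by simp
    next
      case False
      then show ?thesis
        using char_f[of e] \<open>f * e = e\<close> by simp
    qed
    ultimately show ?thesis
      using char_values char_e[of f] True by (intro that[of "- d e"]) simp_all
  next
    case False
    then have "simple_char e f = (0::'k)"
      using char_e[of f] by simp
    moreover have "d e = d f * (simple_char f e - 1)"
    proof (cases "f * e = f")
      case True
      then show ?thesis
        using de char_f[of e] by simp
    next
      case fe_ne_f: False
      have "f * (f * e) * e = f * e"
        using e f by (simp add: mult.assoc[symmetric]) (simp add: mult.assoc)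
      then have "d (f * e) = 0"
        using cocycle_vanishing_on_Irr_vanishes_on_kmor[OF d d_Irr] False fe_ne_f by simp
      then show ?thesis
        using dfe char_f[of e] fe_ne_f by (simp add: eq_neg_iff_add_eq_0)
    qed
    ultimately show ?thesis
      using char_values by (intro that[of "d f"]) simp_all
  qed
qed

lemma cocycle_vanishing_on_Irr_is_coboundary:
  assumes d: "d \<in> ext_cocycles (simple_char e) (simple_char f :: 'm \<Rightarrow> 'k::field)"
    and d_Irr: "\<And>x. x \<in> Irr e f \<Longrightarrow> d x = 0"
  shows "d \<in> ext_coboundaries (simple_char e) (simple_char f)"
proof -
  define g where "g = (\<lambda>m. simple_char f m - simple_char e m :: 'k)"
  obtain c where c: "d e = c * g e" "d f = c * g f"
    using cocycle_values_at_idempotents[OF d d_Irr] unfolding g_def by metis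
  have "g \<in> ext_cocycles (simple_char e) (simple_char f)"
    unfolding g_def using ext_coboundary_in_cocycles monoid_char_simple_char J e f by blast
  then have "d - fscale c g \<in> ext_cocycles (simple_char e) (simple_char f)"
    using ext_cocycles_subspace d
    by (blast intro: function_space.subspace_diff function_space.subspace_scale)
  moreover have "g x = 0" if "x \<in> Irr e f" for x
  proof -
    have "simple_char f x = (0::'k)" "simple_char e x = (0::'k)"
      using simple_char_vanish_on_Irr[OF that] by simp_all
    then show ?thesis
      unfolding g_def by simp
  qed
  ultimately have "d - fscale c g = 0"
    using d_Irr c by (intro cocycle_eq_0) (simp_all add: fscale_apply)
  then show ?thesis
    unfolding ext_coboundaries_def g_def by (auto simp: fscale_def fun_eq_iff)
qed

lemma Irr_dual_cocycle_on_Irr: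
  assumes "x \<in> Irr e f" "y \<in> Irr e f"
  shows "Irr_dual_cocycle e f x y = (if y = x then 1 else (0::'k::field))"
proof -
  have "f * y * e = y"
    using assms(2) Irr_iff by blast
  moreover have "simple_char f y = (0::'k)"
    using simple_char_vanish_on_Irr[OF assms(2)] by simp
  ultimately show ?thesis
    unfolding Irr_dual_cocycle_def by simp
qed

lemma Irr_dual_cocycle_in_cocycles:
  assumes x: "x \<in> Irr e f"
  shows "Irr_dual_cocycle e f x \<in> ext_cocycles (simple_char e) (simple_char f :: 'm \<Rightarrow> 'k::field)"
  unfolding ext_cocycles_def
proof (intro CollectI allI)
  fix u v
  have char_f: "simple_char f m = (if f * m = f then 1 else (0::'k))" for m
    by (rule simple_char_idempotent_left[OF J f])
  have char_e: "simple_char e m = (if m * e = e then 1 else (0::'k))" for m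
    by (rule simple_char_idempotent_right[OF J e])
  have f_uv: "simple_char f (u * v) = (simple_char f u * simple_char f v :: 'k)"
    by (rule simple_char_mult[OF J f])
  have sandwich: "f * (u * v) * e = (f * u) * (v * e)"
    by (simp add: mult.assoc)
  show "Irr_dual_cocycle e f x (u * v) =
      simple_char f u * Irr_dual_cocycle e f x v + Irr_dual_cocycle e f x u * (simple_char e v :: 'k)"
  proof (cases "f * u = f")
    case fu: True
    then have "f * (u * v) * e = f * v * e"
      by (simp add: mult.assoc[symmetric])
    moreover have "f * u * e = f * e"
      using fu by simp
    moreover have "v * e = e \<Longrightarrow> f * v * e = f * e"
      by (simp add: mult.assoc)
    ultimately show ?thesis
      unfolding Irr_dual_cocycle_def f_uv using fu
      by (cases "v * e = e") (simp_all add: char_f char_e algebra_simps)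
  next
    case fu: False
    show ?thesis
    proof (cases "v * e = e")
      case True
      then have "f * (u * v) * e = f * u * e"
        by (simp add: mult.assoc)
      then show ?thesis
        unfolding Irr_dual_cocycle_def f_uv using fu True by (simp add: char_f char_e)
    next
      case False
      \<comment> \<open>This is the only place where the irreducibility of x is used.\<close>
      have "f * (u * v) * e \<noteq> x"
      proof
        assume "f * (u * v) * e = x"
        then have "(v * e) * e = e \<or> f * (f * u) = f"
          using x Irr_iff sandwich by metis
        then show False
          using fu False e f by (simp add: mult.assoc[symmetric]) (simp add: mult.assoc)
      qed
      then show ?thesis
        unfolding Irr_dual_cocycle_def f_uv using fu False by (simp add: char_f char_e)
    qed
  qed
qed

end

lemma dim_Ext1_simple_char_eq_card_Irr:
  assumes J: "J_trivial TYPE('m::{monoid_mult,finite})" and e: "(e::'m) * e = e" and f: "f * f = f"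
  shows "dim_Ext1 (simple_char e :: 'm \<Rightarrow> 'k::field) (simple_char f) = card (Irr e f)"
proof -
  define g :: "'m \<Rightarrow> 'k" where "g = (\<lambda>m. simple_char f m - simple_char e m)"
  have coboundaries: "ext_coboundaries (simple_char e) (simple_char f) = function_space.span ({g} - {0})"
    unfolding g_def by (simp add: ext_coboundaries_eq_span)
  have indep: "function_space.independent ({g} - {0})"
    using function_space.independent_empty by (cases "g = 0") (auto intro: function_space.independent_insertI)
  have "function_space.dim (ext_cocycles (simple_char e) (simple_char f :: 'm \<Rightarrow> 'k))
      = card ({g} - {0}) + card (Irr e f)"
  proof (rule function_space_dim_by_coordinates[where \<delta> = "Irr_dual_cocycle e f"])
    show "{g} - {0} \<subseteq> ext_cocycles (simple_char e) (simple_char f)"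
      unfolding g_def using ext_coboundary_in_cocycles monoid_char_simple_char J e f by blast
    show "w y = 0" if "w \<in> {g} - {0}" "y \<in> Irr e f" for w y
    proof -
      have "simple_char f y = (0::'k)" "simple_char e y = (0::'k)"
        using simple_char_vanish_on_Irr[OF J e f that(2)] by simp_all
      then show ?thesis
        using that(1) unfolding g_def by auto
    qed
    show "w \<in> function_space.span ({g} - {0})"
      if "w \<in> ext_cocycles (simple_char e) (simple_char f)" "\<And>y. y \<in> Irr e f \<Longrightarrow> w y = 0" for w
      using cocycle_vanishing_on_Irr_is_coboundary[OF J e f that] coboundaries by simp
    show "Irr_dual_cocycle e f x \<in> ext_cocycles (simple_char e) (simple_char f :: 'm \<Rightarrow> 'k)"
      if "x \<in> Irr e f" for x
      using that by (rule Irr_dual_cocycle_in_cocycles[OF J e f])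
    show "Irr_dual_cocycle e f x y = (if y = x then 1 else (0::'k))"
      if "x \<in> Irr e f" "y \<in> Irr e f" for x y
      using that by (rule Irr_dual_cocycle_on_Irr[OF J e f])
  qed (simp_all add: ext_cocycles_subspace indep)
  moreover have "function_space.dim (ext_coboundaries (simple_char e) (simple_char f :: 'm \<Rightarrow> 'k))
      = card ({g} - {0})"
    unfolding coboundaries using indep by (rule function_space.dim_span_eq_card_independent)
  ultimately show ?thesis
    unfolding dim_Ext1_def by simp
qed

theorem mainTheorem6:
  assumes "J_trivial TYPE('m::{monoid_mult,finite})"
  shows "bij_betw (simple_char :: 'm \<Rightarrow> 'm \<Rightarrow> 'k::field) idems {\<chi>. monoid_char \<chi>}
    \<and> (\<forall>e \<in> (idems :: 'm set). \<forall>f \<in> idems.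
          dim_Ext1 (simple_char e :: 'm \<Rightarrow> 'k) (simple_char f) = card (Irr e f))"
  using bij_betw_simple_char_monoid_char[OF assms] dim_Ext1_simple_char_eq_card_Irr[OF assms]
  unfolding idems_def by blast

end
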